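(* Let $n,m\ge1$, $\vec v\in\hat N^n$, $\vec w\in\hat N^m$, and define $\vec v\nearrow\vec w=(v_1,\dots,v_n,\ n\triangleright w_1,\dots,n\triangleright w_m)$ and $\vec v\nwarrow\vec w=(v_1,\dots,v_n,\ w_1+n,\dots,w_m+n)$, where $n\triangleright a=a+n$ if $a\neq1$ and $n\triangleright 1=1$. Then: (i) $\vec v\nearrow\vec w,\ \vec v\nwarrow\vec w\in\hat N^{n+m}$, and for trees $\pi,\tau$ one has $\mathrm{name}(\pi\nearrow\tau)=\mathrm{name}(\pi)\nearrow\mathrm{name}(\tau)$ and $\mathrm{name}(\pi\nwarrow\tau)=\mathrm{name}(\pi)\nwarrow\mathrm{name}(\tau)$; (ii) both operations are associative on $\bigcup_{n\ge1}\hat N^n$ and satisfy $(\vec u\nearrow\vec v)\nwarrow\vec w=\vec u\nearrow(\vec v\nwarrow\vec w)$; hence, extended bilinearly, they make $\bigoplus_{n\ge1}K\hat N^n$ an associative $L$-algebra, and $\mathrm{name}$ (extended linearly) is an isomorphism of associative $L$-algebras from $\bigoplus_{n\ge1}KY_n$ (with the tree operations) onto it; (iii) $M(\vec v\nearrow\vec w)=M(\vec v)M(\vec w)$, and $M(\vec v\nwarrow\vec w)=(-1)^mM(\vec v)$ if $\vec w=(1,2,\dots,m)$, while $M(\vec v\nwarrow\vec w)=0$ otherwise.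
   Context: $K$ is a field of characteristic zero. $Y_n$ is the set of planar rooted binary trees with $n$ internal vertices ($n+1$ leaves) up to isotopy. For trees $\pi,\tau$ with at least one internal vertex, $\pi\nearrow\tau$ ("over") is the tree $\tau$ with its leftmost leaf identified with the root of $\pi$, and $\pi\nwarrow\tau$ ("under") is the tree $\pi$ with its rightmost leaf identified with the root of $\tau$. A complete expression in $x_1,\dots,x_{n+1}$ is a full binary parenthesization of $x_1\cdots x_{n+1}$ (every product of two factors, including the outermost, in parentheses); trees correspond bijectively to complete expressions via $|\mapsto x_1$, $\tau_1\vee\tau_2\mapsto(E_1E_2)$ with consecutive relabelling, $\tau_1\vee\tau_2$ being the tree with new root, left subtree $\tau_1$, right subtree $\tau_2$. The name of $\tau\in Y_n$ is the vector $\vec v\in\mathbb N^n$ with $v_i=i$ if at least one left parenthesis stands immediately left of $x_i$ in the complete expression; otherwise the rightmost of the right parentheses immediately following $x_i$ matches a left parenthesis in the run immediately preceding some $x_j$, and $v_i=j$. $\hat N^n$ is the set of names of trees of $Y_n$. An associative $L$-algebra is a vector space with two associative bilinear products $\nearrow,\nwarrow$ satisfying $(x\nearrow y)\nwarrow z=x\nearrow(y\nwarrow z)$. $M(\vec v)=\mu((1,\dots,1),\vec v)$ where $\mu$ is the Möbius function of $\hat N^n$ with the componentwise order ($\vec v\le\vec w$ iff $v_i\le w_i$ for all $i$). *)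

theory Defs
  imports Main
begin

datatype tree = Leaf | Node tree tree

fun internal :: "tree \<Rightarrow> nat" where
  "internal Leaf = 0"
| "internal (Node l r) = Suc (internal l + internal r)"

definition nleaves :: "tree \<Rightarrow> nat" where
  "nleaves t = internal t + 1"

definition Y :: "nat \<Rightarrow> tree set" where
  "Y n = {t. internal t = n}"

fun over :: "tree \<Rightarrow> tree \<Rightarrow> tree" where
  "over p Leaf = p"
| "over p (Node l r) = Node (over p l) r"

fun under :: "tree \<Rightarrow> tree \<Rightarrow> tree" where
  "under Leaf t = t"
| "under (Node l r) t = Node l (under r t)"

datatype tok = LP | RP | X nat

fun is_X :: "tok \<Rightarrow> bool" where
  "is_X (X _) = True"
| "is_X _ = False"

fun var_of :: "tok \<Rightarrow> nat" where
  "var_of (X i) = i"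
| "var_of _ = 0"

fun expr :: "tree \<Rightarrow> nat \<Rightarrow> tok list" where
  "expr Leaf k = [X k]"
| "expr (Node l r) k = [LP] @ expr l k @ expr r (k + nleaves l) @ [RP]"

definition cexpr :: "tree \<Rightarrow> tok list" where
  "cexpr t = expr t 1"

definition balanced_seg :: "tok list \<Rightarrow> nat \<Rightarrow> nat \<Rightarrow> bool" where
  "balanced_seg ts a b =
     (let s = take (b - a + 1) (drop a ts)
      in length (filter (\<lambda>x. x = LP) s) = length (filter (\<lambda>x. x = RP) s))"

text \<open>Position (0-based) of the left parenthesis matching the right parenthesis at position q.\<close>
definition match_lp :: "tok list \<Rightarrow> nat \<Rightarrow> nat" where
  "match_lp ts q = (GREATEST q'. q' < q \<and> ts ! q' = LP \<and> balanced_seg ts q' q)"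

definition name_comp :: "tok list \<Rightarrow> nat \<Rightarrow> nat" where
  "name_comp ts i =
     (let p = (THE p. p < length ts \<and> ts ! p = X i) in
      if 0 < p \<and> ts ! (p - 1) = LP then i
      else
        (let q = (GREATEST q. q < length ts \<and> p < q \<and> (\<forall>k. p < k \<and> k \<le> q \<longrightarrow> ts ! k = RP));
             q' = match_lp ts q;
             r = (LEAST r. q' < r \<and> r < length ts \<and> is_X (ts ! r))
         in var_of (ts ! r)))"

definition name :: "tree \<Rightarrow> nat list" where
  "name t = map (name_comp (cexpr t)) [1..<internal t + 1]"

definition Nhat :: "nat \<Rightarrow> nat list set" where
  "Nhat n = name ` Y n"

definition NhatAll :: "nat list set" where
  "NhatAll = (\<Union>n\<in>{1..}. Nhat n)"

definition tri :: "nat \<Rightarrow> nat \<Rightarrow> nat" where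
  "tri n a = (if a = 1 then 1 else a + n)"

definition over_name :: "nat list \<Rightarrow> nat list \<Rightarrow> nat list" where
  "over_name v w = v @ map (tri (length v)) w"

definition under_name :: "nat list \<Rightarrow> nat list \<Rightarrow> nat list" where
  "under_name v w = v @ map (\<lambda>a. a + length v) w"

definition le_vec :: "nat list \<Rightarrow> nat list \<Rightarrow> bool" where
  "le_vec v w = (length v = length w \<and> (\<forall>i<length v. v ! i \<le> w ! i))"

definition mobius :: "'a set \<Rightarrow> ('a \<Rightarrow> 'a \<Rightarrow> bool) \<Rightarrow> 'a \<Rightarrow> 'a \<Rightarrow> int" where
  "mobius P le =
     (THE f. \<forall>a b. f a b =
        (if a \<in> P \<and> b \<in> P \<and> le a b then
           (if a = b then 1 else - (\<Sum>z\<in>{z\<in>P. le a z \<and> le z b \<and> z \<noteq> b}. f a z))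
         else 0))"

definition M :: "nat list \<Rightarrow> int" where
  "M v = mobius (Nhat (length v)) le_vec (replicate (length v) 1) v"

text \<open>The vector space with basis B over K: finitely supported functions with support in B.\<close>
definition free_on :: "'a set \<Rightarrow> ('a \<Rightarrow> 'k::field) set" where
  "free_on B = {f. finite {a. f a \<noteq> 0} \<and> {a. f a \<noteq> 0} \<subseteq> B}"

definition bilin_ext :: "('a \<Rightarrow> 'a \<Rightarrow> 'a) \<Rightarrow> ('a \<Rightarrow> 'k::field) \<Rightarrow> ('a \<Rightarrow> 'k) \<Rightarrow> ('a \<Rightarrow> 'k)" where
  "bilin_ext op f g = (\<lambda>c. \<Sum>(a, b)\<in>{(a, b). f a \<noteq> 0 \<and> g b \<noteq> 0 \<and> op a b = c}. f a * g b)"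

definition lin_ext :: "('a \<Rightarrow> 'b) \<Rightarrow> ('a \<Rightarrow> 'k::field) \<Rightarrow> ('b \<Rightarrow> 'k)" where
  "lin_ext \<phi> f = (\<lambda>c. \<Sum>a\<in>{a. f a \<noteq> 0 \<and> \<phi> a = c}. f a)"

definition subspace_fun :: "('a \<Rightarrow> 'k::field) set \<Rightarrow> bool" where
  "subspace_fun V \<longleftrightarrow> (\<lambda>_. 0) \<in> V \<and> (\<forall>f\<in>V. \<forall>g\<in>V. (\<lambda>x. f x + g x) \<in> V)
      \<and> (\<forall>c. \<forall>f\<in>V. (\<lambda>x. c * f x) \<in> V)"

definition bilinear_on :: "('a \<Rightarrow> 'k::field) set \<Rightarrow> (('a \<Rightarrow> 'k) \<Rightarrow> ('a \<Rightarrow> 'k) \<Rightarrow> ('a \<Rightarrow> 'k)) \<Rightarrow> bool" where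
  "bilinear_on V op \<longleftrightarrow>
     (\<forall>f\<in>V. \<forall>g\<in>V. op f g \<in> V) \<and>
     (\<forall>f\<in>V. \<forall>g\<in>V. \<forall>h\<in>V. op (\<lambda>x. f x + g x) h = (\<lambda>x. op f h x + op g h x)
                         \<and> op h (\<lambda>x. f x + g x) = (\<lambda>x. op h f x + op h g x)) \<and>
     (\<forall>c. \<forall>f\<in>V. \<forall>g\<in>V. op (\<lambda>x. c * f x) g = (\<lambda>x. c * op f g x)
                       \<and> op f (\<lambda>x. c * g x) = (\<lambda>x. c * op f g x))"

definition assoc_L_algebra :: "('a \<Rightarrow> 'k::field) set \<Rightarrow> (('a \<Rightarrow> 'k) \<Rightarrow> ('a \<Rightarrow> 'k) \<Rightarrow> ('a \<Rightarrow> 'k))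
    \<Rightarrow> (('a \<Rightarrow> 'k) \<Rightarrow> ('a \<Rightarrow> 'k) \<Rightarrow> ('a \<Rightarrow> 'k)) \<Rightarrow> bool" where
  "assoc_L_algebra V ov un \<longleftrightarrow>
     subspace_fun V \<and> bilinear_on V ov \<and> bilinear_on V un \<and>
     (\<forall>f\<in>V. \<forall>g\<in>V. \<forall>h\<in>V. ov (ov f g) h = ov f (ov g h)) \<and>
     (\<forall>f\<in>V. \<forall>g\<in>V. \<forall>h\<in>V. un (un f g) h = un f (un g h)) \<and>
     (\<forall>f\<in>V. \<forall>g\<in>V. \<forall>h\<in>V. un (ov f g) h = ov f (un g h))"

definition L_alg_iso :: "('a \<Rightarrow> 'k::field) set \<Rightarrow> (('a \<Rightarrow> 'k) \<Rightarrow> ('a \<Rightarrow> 'k) \<Rightarrow> ('a \<Rightarrow> 'k))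
    \<Rightarrow> (('a \<Rightarrow> 'k) \<Rightarrow> ('a \<Rightarrow> 'k) \<Rightarrow> ('a \<Rightarrow> 'k))
    \<Rightarrow> ('b \<Rightarrow> 'k) set \<Rightarrow> (('b \<Rightarrow> 'k) \<Rightarrow> ('b \<Rightarrow> 'k) \<Rightarrow> ('b \<Rightarrow> 'k))
    \<Rightarrow> (('b \<Rightarrow> 'k) \<Rightarrow> ('b \<Rightarrow> 'k) \<Rightarrow> ('b \<Rightarrow> 'k))
    \<Rightarrow> (('a \<Rightarrow> 'k) \<Rightarrow> ('b \<Rightarrow> 'k)) \<Rightarrow> bool" where
  "L_alg_iso V ov un W ov' un' \<phi> \<longleftrightarrow>
     assoc_L_algebra V ov un \<and> assoc_L_algebra W ov' un' \<and>
     bij_betw \<phi> V W \<and>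
     (\<forall>f\<in>V. \<forall>g\<in>V. \<phi> (\<lambda>x. f x + g x) = (\<lambda>y. \<phi> f y + \<phi> g y)) \<and>
     (\<forall>c. \<forall>f\<in>V. \<phi> (\<lambda>x. c * f x) = (\<lambda>y. c * \<phi> f y)) \<and>
     (\<forall>f\<in>V. \<forall>g\<in>V. \<phi> (ov f g) = ov' (\<phi> f) (\<phi> g)) \<and>
     (\<forall>f\<in>V. \<forall>g\<in>V. \<phi> (un f g) = un' (\<phi> f) (\<phi> g))"

end

theory Submission
  imports Defs
begin

text \<open>
  With leaves numbered from k, the name of \<open>Node l r\<close> is
  \<open>name_from l k @ k # name_from r (k + internal l + 1)\<close>: every internal vertex, listed in
  order, contributes the number of its first leaf. Establishing this means parsing the complete
  expression, i.e. matching parentheses. In this form \<open>over\<close> and \<open>under\<close> act on names by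
  concatenation with a shift, which gives (i); the laws of (ii) become identities of lists, and
  since \<open>name\<close> is injective its linear extension is an isomorphism of the free L-algebras.
  For (iii), induction along the componentwise order shows that M is multiplicative over the
  coordinates: coordinate p (counted from 0) contributes 1 if it equals 1, -1 if it takes its
  largest value p + 1, and 0 otherwise. Indeed, below a name v only the vectors with coordinates
  in {1, p + 1} have nonzero weight; they form a Boolean lattice, over which the alternating sum
  vanishes unless v is its bottom element.
\<close>

section \<open>Bilinear and linear extensions to free vector spaces\<close>

lemma bilin_ext_eq_sum:
  fixes f g :: "'a \<Rightarrow> 'k::field"
  assumes "finite A" "finite B" "{a. f a \<noteq> 0} \<subseteq> A" "{b. g b \<noteq> 0} \<subseteq> B"
  shows "bilin_ext op f g c = (\<Sum>a\<in>A. \<Sum>b\<in>B. f a * g b * of_bool (op a b = c))"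
proof -
  have "bilin_ext op f g c = (\<Sum>(a, b)\<in>A \<times> B. f a * g b * of_bool (op a b = c))"
    unfolding bilin_ext_def
    by (rule sum.mono_neutral_cong_left) (use assms in \<open>auto split: if_splits\<close>)
  then show ?thesis by (simp add: sum.cartesian_product)
qed

lemma bilin_ext_support:
  "{c. bilin_ext op f g c \<noteq> 0} \<subseteq> (\<lambda>(a, b). op a b) ` ({a. f a \<noteq> 0} \<times> {b. g b \<noteq> 0})"
proof (rule subsetI, rule ccontr)
  fix c assume "c \<in> {c. bilin_ext op f g c \<noteq> 0}"
    and "c \<notin> (\<lambda>(a, b). op a b) ` ({a. f a \<noteq> 0} \<times> {b. g b \<noteq> 0})"
  then have "{(a, b). f a \<noteq> 0 \<and> g b \<noteq> 0 \<and> op a b = c} = {}" by auto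
  then have "bilin_ext op f g c = 0" unfolding bilin_ext_def by (simp only: sum.empty)
  with \<open>c \<in> {c. bilin_ext op f g c \<noteq> 0}\<close> show False by simp
qed

lemma bilin_ext_in_free_on:
  assumes "f \<in> free_on B" "g \<in> free_on B" "\<forall>a\<in>B. \<forall>b\<in>B. op a b \<in> B"
  shows "bilin_ext op f g \<in> free_on B"
proof -
  let ?S = "(\<lambda>(a, b). op a b) ` ({a. f a \<noteq> 0} \<times> {b. g b \<noteq> 0})"
  have "finite ?S" "?S \<subseteq> B" using assms by (auto simp: free_on_def)
  then show ?thesis
    using bilin_ext_support[of op f g] by (auto simp: free_on_def intro: finite_subset)
qed

lemma sum_bilin_ext_mult:
  fixes f g :: "'a \<Rightarrow> 'k::field"
  assumes "finite A" "finite B" "{a. f a \<noteq> 0} \<subseteq> A" "{b. g b \<noteq> 0} \<subseteq> B"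
    and "finite S" "\<forall>a\<in>A. \<forall>b\<in>B. op a b \<in> S"
  shows "(\<Sum>x\<in>S. bilin_ext op f g x * W x) = (\<Sum>a\<in>A. \<Sum>b\<in>B. f a * g b * W (op a b))"
proof -
  have "(\<Sum>x\<in>S. bilin_ext op f g x * W x)
      = (\<Sum>x\<in>S. \<Sum>a\<in>A. \<Sum>b\<in>B. f a * g b * (W x * of_bool (op a b = x)))"
    by (simp add: bilin_ext_eq_sum[OF assms(1-4)] sum_distrib_left sum_distrib_right mult_ac)
  also have "\<dots> = (\<Sum>a\<in>A. \<Sum>b\<in>B. f a * g b * (\<Sum>x\<in>S. W x * of_bool (op a b = x)))"
    by (simp only: sum_distrib_left sum.swap[of _ S])
  also have "\<dots> = (\<Sum>a\<in>A. \<Sum>b\<in>B. f a * g b * W (op a b))"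
  proof (intro sum.cong refl)
    fix a b assume "a \<in> A" "b \<in> B"
    then have "S \<inter> {x. op a b = x} = {op a b}" using assms(6) by auto
    then show "f a * g b * (\<Sum>x\<in>S. W x * of_bool (op a b = x)) = f a * g b * W (op a b)"
      using assms(5) by simp
  qed
  finally show ?thesis .
qed

lemma bilin_ext_bilin_ext_left:
  fixes f g h :: "'a \<Rightarrow> 'k::field"
  assumes "finite {a. f a \<noteq> 0}" "finite {a. g a \<noteq> 0}" "finite {a. h a \<noteq> 0}"
  shows "bilin_ext op1 (bilin_ext op2 f g) h c = (\<Sum>a | f a \<noteq> 0. \<Sum>a' | g a' \<noteq> 0. \<Sum>b | h b \<noteq> 0.
    f a * g a' * h b * of_bool (op1 (op2 a a') b = c))"
proof -
  define S where "S = (\<lambda>(a, b). op2 a b) ` ({a. f a \<noteq> 0} \<times> {a. g a \<noteq> 0})"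
  have S: "finite S" "{x. bilin_ext op2 f g x \<noteq> 0} \<subseteq> S"
    using assms bilin_ext_support[of op2 f g] by (simp_all add: S_def)
  have "bilin_ext op1 (bilin_ext op2 f g) h c
      = (\<Sum>x\<in>S. bilin_ext op2 f g x * (\<Sum>b | h b \<noteq> 0. h b * of_bool (op1 x b = c)))"
    by (simp add: bilin_ext_eq_sum[OF S(1) assms(3) S(2) subset_refl] sum_distrib_left mult_ac)
  also have "\<dots> = (\<Sum>a | f a \<noteq> 0. \<Sum>a' | g a' \<noteq> 0.
      f a * g a' * (\<Sum>b | h b \<noteq> 0. h b * of_bool (op1 (op2 a a') b = c)))"
    by (rule sum_bilin_ext_mult) (use assms S in \<open>auto simp: S_def\<close>)
  finally show ?thesis by (simp add: sum_distrib_left mult_ac del: sum_mult_of_bool_eq)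
qed

lemma bilin_ext_bilin_ext_right:
  fixes f g h :: "'a \<Rightarrow> 'k::field"
  assumes "finite {a. f a \<noteq> 0}" "finite {a. g a \<noteq> 0}" "finite {a. h a \<noteq> 0}"
  shows "bilin_ext op3 f (bilin_ext op4 g h) c = (\<Sum>a | f a \<noteq> 0. \<Sum>a' | g a' \<noteq> 0. \<Sum>b | h b \<noteq> 0.
    f a * g a' * h b * of_bool (op3 a (op4 a' b) = c))"
proof -
  define S where "S = (\<lambda>(a, b). op4 a b) ` ({a. g a \<noteq> 0} \<times> {a. h a \<noteq> 0})"
  have S: "finite S" "{x. bilin_ext op4 g h x \<noteq> 0} \<subseteq> S"
    using assms bilin_ext_support[of op4 g h] by (simp_all add: S_def)
  have "bilin_ext op3 f (bilin_ext op4 g h) c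
      = (\<Sum>a | f a \<noteq> 0. f a * (\<Sum>y\<in>S. bilin_ext op4 g h y * of_bool (op3 a y = c)))"
    by (simp add: bilin_ext_eq_sum[OF assms(1) S(1) subset_refl S(2)] sum_distrib_left mult_ac)
  also have "\<dots> = (\<Sum>a | f a \<noteq> 0. f a * (\<Sum>a' | g a' \<noteq> 0. \<Sum>b | h b \<noteq> 0.
      g a' * h b * of_bool (op3 a (op4 a' b) = c)))"
    by (intro sum.cong refl arg_cong[where f = "(*) _"] sum_bilin_ext_mult)
      (use assms S in \<open>auto simp: S_def\<close>)
  finally show ?thesis by (simp add: sum_distrib_left mult_ac del: sum_mult_of_bool_eq)
qed

lemma bilin_ext_mixed_assoc:
  fixes f g h :: "'a \<Rightarrow> 'k::field"
  assumes "f \<in> free_on B" "g \<in> free_on B" "h \<in> free_on B"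
    and law: "\<forall>a\<in>B. \<forall>a'\<in>B. \<forall>b\<in>B. op1 (op2 a a') b = op3 a (op4 a' b)"
  shows "bilin_ext op1 (bilin_ext op2 f g) h = bilin_ext op3 f (bilin_ext op4 g h)"
proof
  fix c
  have fin: "finite {a. f a \<noteq> 0}" "finite {a. g a \<noteq> 0}" "finite {a. h a \<noteq> 0}"
    using assms(1-3) by (simp_all add: free_on_def)
  have "op1 (op2 a a') b = op3 a (op4 a' b)" if "f a \<noteq> 0" "g a' \<noteq> 0" "h b \<noteq> 0" for a a' b
    using law assms(1-3) that unfolding free_on_def by blast
  then show "bilin_ext op1 (bilin_ext op2 f g) h c = bilin_ext op3 f (bilin_ext op4 g h) c"
    by (simp add: bilin_ext_bilin_ext_left[OF fin] bilin_ext_bilin_ext_right[OF fin]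
        del: sum_mult_of_bool_eq)
qed

lemma subspace_fun_free_on: "subspace_fun (free_on B :: ('a \<Rightarrow> 'k::field) set)"
  unfolding subspace_fun_def
proof (intro conjI ballI allI)
  fix f g :: "'a \<Rightarrow> 'k" and c :: 'k
  assume f: "f \<in> free_on B" and g: "g \<in> free_on B"
  have "{x. f x + g x \<noteq> 0} \<subseteq> {x. f x \<noteq> 0} \<union> {x. g x \<noteq> 0}" by auto
  with f g show "(\<lambda>x. f x + g x) \<in> free_on B"
    unfolding free_on_def by (auto intro: finite_subset)
  have "{x. c * f x \<noteq> 0} \<subseteq> {x. f x \<noteq> 0}" by auto
  with f show "(\<lambda>x. c * f x) \<in> free_on B"
    unfolding free_on_def by (auto intro: finite_subset)
qed (simp add: free_on_def)

lemma bilinear_on_bilin_ext: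
  assumes "\<forall>a\<in>B. \<forall>b\<in>B. op a b \<in> B"
  shows "bilinear_on (free_on B :: ('a \<Rightarrow> 'k::field) set) (bilin_ext op)"
  unfolding bilinear_on_def
proof (intro conjI ballI allI)
  fix f g h :: "'a \<Rightarrow> 'k" and c :: 'k
  assume f: "f \<in> free_on B" and g: "g \<in> free_on B" and h: "h \<in> free_on B"
  show "bilin_ext op f g \<in> free_on B" using bilin_ext_in_free_on[OF f g assms] .
  let ?FG = "{a. f a \<noteq> 0} \<union> {a. g a \<noteq> 0}" and ?H = "{a. h a \<noteq> 0}"
  have fin: "finite ?FG" "finite ?H" using f g h by (auto simp: free_on_def)
  have supp: "{a. f a + g a \<noteq> 0} \<subseteq> ?FG" "{a. c * f a \<noteq> 0} \<subseteq> ?FG" "{a. c * g a \<noteq> 0} \<subseteq> ?FG"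
    by auto
  note sums = bilin_ext_eq_sum[OF fin] bilin_ext_eq_sum[OF fin(2,1)]
  show "bilin_ext op (\<lambda>x. f x + g x) h = (\<lambda>x. bilin_ext op f h x + bilin_ext op g h x)"
    using supp by (intro ext) (simp add: sums algebra_simps sum.distrib)
  show "bilin_ext op h (\<lambda>x. f x + g x) = (\<lambda>x. bilin_ext op h f x + bilin_ext op h g x)"
    using supp by (intro ext) (simp add: sums algebra_simps sum.distrib)
  show "bilin_ext op (\<lambda>x. c * f x) g = (\<lambda>x. c * bilin_ext op f g x)"
    by (intro ext) (simp add: bilin_ext_eq_sum[OF fin(1,1) supp(2)] bilin_ext_eq_sum[OF fin(1,1)]
        sum_distrib_left mult_ac)
  show "bilin_ext op f (\<lambda>x. c * g x) = (\<lambda>x. c * bilin_ext op f g x)"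
    by (intro ext) (simp add: bilin_ext_eq_sum[OF fin(1,1) _ supp(3)] bilin_ext_eq_sum[OF fin(1,1)]
        sum_distrib_left mult_ac)
qed

lemma assoc_L_algebra_free_on:
  assumes "\<forall>a\<in>B. \<forall>b\<in>B. ov a b \<in> B" "\<forall>a\<in>B. \<forall>b\<in>B. un a b \<in> B"
    and "\<forall>a\<in>B. \<forall>a'\<in>B. \<forall>b\<in>B. ov (ov a a') b = ov a (ov a' b)"
    and "\<forall>a\<in>B. \<forall>a'\<in>B. \<forall>b\<in>B. un (un a a') b = un a (un a' b)"
    and "\<forall>a\<in>B. \<forall>a'\<in>B. \<forall>b\<in>B. un (ov a a') b = ov a (un a' b)"
  shows "assoc_L_algebra (free_on B :: ('a \<Rightarrow> 'k::field) set) (bilin_ext ov) (bilin_ext un)"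
  unfolding assoc_L_algebra_def
  using assms by (simp add: subspace_fun_free_on bilinear_on_bilin_ext bilin_ext_mixed_assoc)

lemma lin_ext_eq_sum:
  fixes f :: "'a \<Rightarrow> 'k::field"
  assumes "finite A" "{a. f a \<noteq> 0} \<subseteq> A"
  shows "lin_ext \<phi> f c = (\<Sum>a\<in>A. f a * of_bool (\<phi> a = c))"
  unfolding lin_ext_def sum_mult_of_bool_eq[OF assms(1)]
  by (rule sum.mono_neutral_left) (use assms in auto)

lemma lin_ext_support: "{c. lin_ext \<phi> f c \<noteq> 0} \<subseteq> \<phi> ` {a. f a \<noteq> 0}"
proof (rule subsetI, rule ccontr)
  fix c assume "c \<in> {c. lin_ext \<phi> f c \<noteq> 0}" and "c \<notin> \<phi> ` {a. f a \<noteq> 0}"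
  then have "{a. f a \<noteq> 0 \<and> \<phi> a = c} = {}" by auto
  then have "lin_ext \<phi> f c = 0" unfolding lin_ext_def by (simp only: sum.empty)
  with \<open>c \<in> {c. lin_ext \<phi> f c \<noteq> 0}\<close> show False by simp
qed

lemma lin_ext_in_free_on: "f \<in> free_on B \<Longrightarrow> lin_ext \<phi> f \<in> free_on (\<phi> ` B)"
  using lin_ext_support[of \<phi> f] unfolding free_on_def by (blast intro: finite_subset)

lemma lin_ext_apply:
  assumes "inj_on \<phi> B" "f \<in> free_on B" "a \<in> B"
  shows "lin_ext \<phi> f (\<phi> a) = f a"
proof -
  have "{x. f x \<noteq> 0 \<and> \<phi> x = \<phi> a} \<subseteq> {a}"
    using assms by (auto simp: free_on_def inj_on_def)
  then have "lin_ext \<phi> f (\<phi> a) = sum f {a}"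
    unfolding lin_ext_def by (intro sum.mono_neutral_left) auto
  then show ?thesis by simp
qed

lemma lin_ext_outside: "f \<in> free_on B \<Longrightarrow> c \<notin> \<phi> ` B \<Longrightarrow> lin_ext \<phi> f c = 0"
  using lin_ext_support[of \<phi> f] by (auto simp: free_on_def)

lemma lin_ext_linear:
  fixes f g :: "'a \<Rightarrow> 'k::field"
  assumes "f \<in> free_on B" "g \<in> free_on B"
  shows "lin_ext \<phi> (\<lambda>x. f x + g x) = (\<lambda>y. lin_ext \<phi> f y + lin_ext \<phi> g y)"
    and "lin_ext \<phi> (\<lambda>x. c * f x) = (\<lambda>y. c * lin_ext \<phi> f y)"
proof -
  let ?A = "{a. f a \<noteq> 0} \<union> {a. g a \<noteq> 0}"
  have fin: "finite ?A" using assms by (auto simp: free_on_def)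
  have supp: "{a. f a + g a \<noteq> 0} \<subseteq> ?A" "{a. c * f a \<noteq> 0} \<subseteq> ?A" by auto
  show "lin_ext \<phi> (\<lambda>x. f x + g x) = (\<lambda>y. lin_ext \<phi> f y + lin_ext \<phi> g y)"
    by (intro ext) (simp add: lin_ext_eq_sum[OF fin supp(1)] lin_ext_eq_sum[OF fin]
        algebra_simps sum.distrib del: sum_mult_of_bool_eq)
  show "lin_ext \<phi> (\<lambda>x. c * f x) = (\<lambda>y. c * lin_ext \<phi> f y)"
    by (intro ext) (simp add: lin_ext_eq_sum[OF fin supp(2)] lin_ext_eq_sum[OF fin]
        sum_distrib_left mult_ac del: sum_mult_of_bool_eq)
qed

lemma bij_betw_lin_ext:
  assumes inj: "inj_on \<phi> B"
  shows "bij_betw (lin_ext \<phi>) (free_on B :: ('a \<Rightarrow> 'k::field) set) (free_on (\<phi> ` B))"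
proof -
  define pull :: "('b \<Rightarrow> 'k) \<Rightarrow> 'a \<Rightarrow> 'k" where "pull F a = (if a \<in> B then F (\<phi> a) else 0)" for F a
  have pull_free: "pull F \<in> free_on B" if F: "F \<in> free_on (\<phi> ` B)" for F
  proof -
    have sub: "{a. pull F a \<noteq> 0} \<subseteq> B" by (auto simp: pull_def split: if_splits)
    have "\<phi> ` {a. pull F a \<noteq> 0} \<subseteq> {b. F b \<noteq> 0}" by (auto simp: pull_def split: if_splits)
    with F have "finite (\<phi> ` {a. pull F a \<noteq> 0})" by (auto simp: free_on_def intro: finite_subset)
    then have "finite {a. pull F a \<noteq> 0}" using inj_on_subset[OF inj sub] by (rule finite_imageD)
    with sub show ?thesis by (simp add: free_on_def)
  qed
  show ?thesis
  proof (rule bij_betw_byWitness[where f' = pull])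
    show "\<forall>f\<in>(free_on B :: ('a \<Rightarrow> 'k) set). pull (lin_ext \<phi> f) = f"
    proof (intro ballI ext)
      fix f :: "'a \<Rightarrow> 'k" and a assume f: "f \<in> free_on B"
      show "pull (lin_ext \<phi> f) a = f a"
        using lin_ext_apply[OF inj f] f by (auto simp: pull_def free_on_def)
    qed
    show "\<forall>F\<in>free_on (\<phi> ` B). lin_ext \<phi> (pull F) = F"
    proof (intro ballI ext)
      fix F :: "'b \<Rightarrow> 'k" and c assume F: "F \<in> free_on (\<phi> ` B)"
      show "lin_ext \<phi> (pull F) c = F c"
      proof (cases "c \<in> \<phi> ` B")
        case True
        then show ?thesis using lin_ext_apply[OF inj pull_free[OF F]] by (auto simp: pull_def)
      next
        case False
        then show ?thesis
          using F lin_ext_outside[OF pull_free[OF F] False] by (auto simp: free_on_def)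
      qed
    qed
    show "lin_ext \<phi> ` free_on B \<subseteq> free_on (\<phi> ` B)" using lin_ext_in_free_on by blast
    show "pull ` free_on (\<phi> ` B) \<subseteq> free_on B" using pull_free by blast
  qed
qed

lemma lin_ext_bilin_ext:
  fixes f g :: "'a \<Rightarrow> 'k::field"
  assumes inj: "inj_on \<phi> B" and f: "f \<in> free_on B" and g: "g \<in> free_on B"
    and hom: "\<forall>a\<in>B. \<forall>b\<in>B. \<phi> (ov a b) = ov' (\<phi> a) (\<phi> b)"
  shows "lin_ext \<phi> (bilin_ext ov f g) = bilin_ext ov' (lin_ext \<phi> f) (lin_ext \<phi> g)"
proof
  fix c
  let ?F = "{a. f a \<noteq> 0}" and ?G = "{a. g a \<noteq> 0}"
  define S where "S = (\<lambda>(a, b). ov a b) ` (?F \<times> ?G)"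
  have fin: "finite ?F" "finite ?G" and sub: "?F \<subseteq> B" "?G \<subseteq> B"
    using f g by (simp_all add: free_on_def)
  have "lin_ext \<phi> (bilin_ext ov f g) c = (\<Sum>x\<in>S. bilin_ext ov f g x * of_bool (\<phi> x = c))"
    by (rule lin_ext_eq_sum) (use fin bilin_ext_support[of ov f g] in \<open>simp_all add: S_def\<close>)
  also have "\<dots> = (\<Sum>a\<in>?F. \<Sum>b\<in>?G. f a * g b * of_bool (\<phi> (ov a b) = c))"
    by (rule sum_bilin_ext_mult) (use fin in \<open>auto simp: S_def\<close>)
  also have "\<dots> = (\<Sum>a\<in>?F. \<Sum>b\<in>?G.
      lin_ext \<phi> f (\<phi> a) * lin_ext \<phi> g (\<phi> b) * of_bool (ov' (\<phi> a) (\<phi> b) = c))"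
  proof (intro sum.cong refl)
    fix a b assume "a \<in> ?F" "b \<in> ?G"
    with sub have "a \<in> B" "b \<in> B" by auto
    then show "f a * g b * of_bool (\<phi> (ov a b) = c)
        = lin_ext \<phi> f (\<phi> a) * lin_ext \<phi> g (\<phi> b) * of_bool (ov' (\<phi> a) (\<phi> b) = c)"
      using hom lin_ext_apply[OF inj f] lin_ext_apply[OF inj g] by simp
  qed
  also have "\<dots> = (\<Sum>a'\<in>\<phi> ` ?F. \<Sum>b'\<in>\<phi> ` ?G.
      lin_ext \<phi> f a' * lin_ext \<phi> g b' * of_bool (ov' a' b' = c))"
    using inj_on_subset[OF inj sub(1)] inj_on_subset[OF inj sub(2)]
    by (simp add: sum.reindex del: sum_mult_of_bool_eq)
  also have "\<dots> = bilin_ext ov' (lin_ext \<phi> f) (lin_ext \<phi> g) c"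
    by (rule bilin_ext_eq_sum[symmetric])
      (use fin lin_ext_support[of \<phi> f] lin_ext_support[of \<phi> g] in auto)
  finally show "lin_ext \<phi> (bilin_ext ov f g) c = bilin_ext ov' (lin_ext \<phi> f) (lin_ext \<phi> g) c" .
qed

lemma L_alg_iso_lin_ext:
  assumes inj: "inj_on \<phi> B"
    and "\<forall>a\<in>B. \<forall>b\<in>B. \<phi> (ov a b) = ov' (\<phi> a) (\<phi> b)"
    and "\<forall>a\<in>B. \<forall>b\<in>B. \<phi> (un a b) = un' (\<phi> a) (\<phi> b)"
    and "assoc_L_algebra (free_on B :: ('a \<Rightarrow> 'k::field) set) (bilin_ext ov) (bilin_ext un)"
    and "assoc_L_algebra (free_on (\<phi> ` B) :: ('b \<Rightarrow> 'k) set) (bilin_ext ov') (bilin_ext un')"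
  shows "L_alg_iso (free_on B :: ('a \<Rightarrow> 'k) set) (bilin_ext ov) (bilin_ext un)
    (free_on (\<phi> ` B)) (bilin_ext ov') (bilin_ext un') (lin_ext \<phi>)"
  unfolding L_alg_iso_def
  using assms(4,5) bij_betw_lin_ext[OF inj] lin_ext_linear
    lin_ext_bilin_ext[OF inj _ _ assms(2)] lin_ext_bilin_ext[OF inj _ _ assms(3)]
  by auto

section \<open>Names of trees\<close>

lemma internal_over [simp]: "internal (over p t) = internal p + internal t"
  by (induction t) auto

lemma internal_under [simp]: "internal (under p t) = internal p + internal t"
  by (induction p) auto

fun name_from :: "tree \<Rightarrow> nat \<Rightarrow> nat list" where
  "name_from Leaf k = []"
| "name_from (Node l r) k = name_from l k @ k # name_from r (k + internal l + 1)"

lemma length_name_from [simp]: "length (name_from t k) = internal t"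
  by (induction t arbitrary: k) auto

lemma name_from_shift: "name_from t (k + d) = map (\<lambda>a. a + d) (name_from t k)"
proof (induction t arbitrary: k)
  case (Node l r)
  show ?case using Node.IH(1)[of k] Node.IH(2)[of "k + internal l + 1"]
    by (simp add: ac_simps)
qed simp

lemma name_from_bounds:
  "p < internal t \<Longrightarrow> k \<le> name_from t k ! p \<and> name_from t k ! p \<le> k + p"
proof (induction t arbitrary: k p)
  case (Node l r)
  consider "p < internal l" | "p = internal l" | "internal l < p" by linarith
  then show ?case
  proof cases
    case 1
    then show ?thesis using Node.IH(1)[of p k] by (simp add: nth_append)
  next
    case 3
    then have "p - internal l - 1 < internal r" using Node.prems by simp
    with 3 show ?thesis using Node.IH(2)[of "p - internal l - 1" "k + internal l + 1"]
      by (simp add: nth_append nth_Cons')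
  qed (simp add: nth_append)
qed simp

lemma name_from_ge: "a \<in> set (name_from t k) \<Longrightarrow> k \<le> a"
  using name_from_bounds[of _ t k] by (auto simp: in_set_conv_nth)

lemma hd_name_from: "t \<noteq> Leaf \<Longrightarrow> name_from t k ! 0 = k"
proof (induction t arbitrary: k)
  case (Node l r)
  then show ?case by (cases "l = Leaf") (auto simp: nth_append)
qed simp

lemma name_from_eq_replicate:
  assumes "\<And>p. 0 < p \<Longrightarrow> p < internal t \<Longrightarrow> name_from t k ! p \<noteq> k + p"
  shows "name_from t k = replicate (internal t) k"
  using assms
proof (induction t)
  case (Node l r)
  have "r = Leaf"
  proof (rule ccontr)
    assume "r \<noteq> Leaf"
    then obtain a b where r: "r = Node a b" by (cases r) auto
    then have "name_from (Node l r) k ! (internal l + 1) = k + (internal l + 1)"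
      using hd_name_from[of r "k + internal l + 1"] by (simp add: nth_append)
    with Node.prems[of "internal l + 1"] r show False by simp
  qed
  moreover have "name_from l k = replicate (internal l) k"
  proof (rule Node.IH(1))
    fix p assume "0 < p" "p < internal l"
    then show "name_from l k ! p \<noteq> k + p"
      using Node.prems[of p] by (simp add: nth_append)
  qed
  ultimately show ?case by (simp add: replicate_app_Cons_same)
qed simp

lemma append_Cons_eq_append_Cons:
  "xs @ x # ys = xs' @ x # ys' \<Longrightarrow> x \<notin> set ys \<Longrightarrow> x \<notin> set ys' \<Longrightarrow> xs = xs' \<and> ys = ys'"
proof (induction xs arbitrary: xs')
  case Nil
  then show ?case by (cases xs') auto
next
  case (Cons a xs)
  then show ?case by (cases xs') auto
qed

lemma name_from_inj: "name_from t k = name_from t' k \<Longrightarrow> t = t'"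
proof (induction t arbitrary: t' k)
  case Leaf
  then show ?case by (cases t') auto
next
  case (Node l r)
  then obtain l' r' where t': "t' = Node l' r'" by (cases t') auto
  have "name_from l k @ k # name_from r (k + internal l + 1)
      = name_from l' k @ k # name_from r' (k + internal l' + 1)"
    using Node.prems t' by simp
  moreover have "k \<notin> set (name_from r (k + internal l + 1))"
    and "k \<notin> set (name_from r' (k + internal l' + 1))"
    using name_from_ge by fastforce+
  ultimately have l: "name_from l k = name_from l' k"
    and r: "name_from r (k + internal l + 1) = name_from r' (k + internal l' + 1)"
    by (blast dest: append_Cons_eq_append_Cons)+
  from l have "internal l = internal l'" by (metis length_name_from)
  with l r Node.IH t' show ?case by auto
qed

lemma name_from_over:
  "name_from (over p t) k
    = name_from p k @ map (\<lambda>a. if a = k then k else a + internal p) (name_from t k)"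
proof (induction t arbitrary: k)
  case (Node l r)
  have "map (\<lambda>a. if a = k then k else a + internal p) (name_from r (k + internal l + 1))
      = map (\<lambda>a. a + internal p) (name_from r (k + internal l + 1))"
    by (auto dest: name_from_ge)
  also have "\<dots> = name_from r (k + (internal p + internal l) + 1)"
    using name_from_shift[of r "k + internal l + 1" "internal p"] by (simp add: ac_simps)
  finally show ?case using Node by simp
qed simp

lemma name_from_under:
  "name_from (under p t) k = name_from p k @ map (\<lambda>a. a + internal p) (name_from t k)"
proof (induction p arbitrary: k)
  case (Node l r)
  then show ?case
    using name_from_shift[of t k "Suc (internal l + internal r)"]
      name_from_shift[of t "k + internal l + 1" "internal r"]
    by (simp add: ac_simps)
qed simp

section \<open>Reading names off complete expressions\<close>

lemma nleaves_eq [simp]: "nleaves t = internal t + 1"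
  by (simp add: nleaves_def)

lemma X_in_expr_iff: "X i \<in> set (expr t k) \<longleftrightarrow> k \<le> i \<and> i \<le> k + internal t"
  by (induction t arbitrary: k) auto

lemma expr_not_Nil [simp]: "expr t k \<noteq> []"
  by (cases t) auto

lemma hd_expr_not_RP: "hd (expr t k) \<noteq> RP"
  by (cases t) auto

lemma last_expr_not_LP: "last (expr t k) \<noteq> LP"
  by (cases t) auto

lemma expr_start: "\<exists>j G. expr t k = replicate j LP @ X k # G \<and> (t \<noteq> Leaf \<longrightarrow> 0 < j)"
proof (induction t arbitrary: k)
  case Leaf
  show ?case by (rule exI[of _ 0]) simp
next
  case (Node l r)
  then obtain j G where "expr l k = replicate j LP @ X k # G" by blast
  then show ?case by (intro exI[of _ "Suc j"]) auto
qed

lemma expr_end: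
  "\<exists>F r. expr t k = F @ X (k + internal t) # replicate r RP \<and> X (k + internal t) \<notin> set F
     \<and> (t = Leaf \<longrightarrow> F = []) \<and> (t \<noteq> Leaf \<longrightarrow> 0 < r \<and> F \<noteq> [] \<and> last F \<noteq> LP)"
proof (induction t arbitrary: k)
  case (Node l r)
  let ?k' = "k + internal l + 1"
  obtain F j where F: "expr r ?k' = F @ X (?k' + internal r) # replicate j RP"
    "X (?k' + internal r) \<notin> set F" "r = Leaf \<longrightarrow> F = []" "r \<noteq> Leaf \<longrightarrow> F \<noteq> [] \<and> last F \<noteq> LP"
    using Node.IH(2) by blast
  have "last (LP # expr l k @ F) \<noteq> LP"
    using F(3,4) last_expr_not_LP[of l k] by (cases "r = Leaf") auto
  moreover have "expr (Node l r) k
      = (LP # expr l k @ F) @ X (k + internal (Node l r)) # replicate (Suc j) RP"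
    using F(1) by (simp add: replicate_append_same[symmetric] ac_simps)
  moreover have "X (k + internal (Node l r)) \<notin> set (LP # expr l k @ F)"
    using F(2) by (auto simp: X_in_expr_iff ac_simps)
  ultimately show ?case by blast
qed simp

abbreviation count_LP :: "tok list \<Rightarrow> nat" where
  "count_LP xs \<equiv> length (filter (\<lambda>x. x = LP) xs)"

abbreviation count_RP :: "tok list \<Rightarrow> nat" where
  "count_RP xs \<equiv> length (filter (\<lambda>x. x = RP) xs)"

lemma count_LP_expr [simp]: "count_LP (expr t k) = internal t"
  by (induction t arbitrary: k) auto

lemma count_RP_expr [simp]: "count_RP (expr t k) = internal t"
  by (induction t arbitrary: k) auto

lemma count_RP_take_expr_le: "count_RP (take j (expr t k)) \<le> count_LP (take j (expr t k))"
proof (induction t arbitrary: j k)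
  case Leaf
  then show ?case by (cases j) auto
next
  case (Node l r)
  let ?A = "expr l k" and ?B = "expr r (k + internal l + 1)"
  show ?case
  proof (cases "length (expr (Node l r) k) \<le> j")
    case False
    have "expr (Node l r) k = (LP # ?A @ ?B) @ [RP]" by simp
    with False have "take j (expr (Node l r) k) = take j (LP # ?A @ ?B)"
      by (simp only: take_append) simp
    moreover have "count_RP (take j (LP # ?A @ ?B)) \<le> count_LP (take j (LP # ?A @ ?B))"
      using Node.IH(1)[of "j - 1" k] Node.IH(2)[of "j - 1 - length ?A" "k + internal l + 1"]
      by (cases j) auto
    ultimately show ?thesis by simp
  qed simp
qed

lemma count_LP_drop_expr_less:
  assumes "t \<noteq> Leaf" "0 < j" "j < length (expr t k)"
  shows "count_LP (drop j (expr t k)) < count_RP (drop j (expr t k))"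
proof -
  obtain l r where t: "t = Node l r" using assms(1) by (cases t) auto
  let ?A = "expr l k" and ?B = "expr r (k + internal l + 1)"
  have "take j (expr t k) = LP # take (j - 1) (?A @ ?B)"
    using assms(2,3) t by (cases j) auto
  moreover have "count_RP (take (j - 1) (?A @ ?B)) \<le> count_LP (take (j - 1) (?A @ ?B))"
    using count_RP_take_expr_le[of "j - 1" l k]
      count_RP_take_expr_le[of "j - 1 - length ?A" r "k + internal l + 1"]
    by simp
  ultimately have "count_RP (take j (expr t k)) < count_LP (take j (expr t k))" by simp
  moreover have "count_LP (take j (expr t k)) + count_LP (drop j (expr t k))
      = count_RP (take j (expr t k)) + count_RP (drop j (expr t k))"
    by (metis append_take_drop_id count_LP_expr count_RP_expr filter_append length_append)
  ultimately show ?thesis by linarith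
qed

lemma the_index_eq:
  assumes "xs = ys @ x # zs" "x \<notin> set ys" "x \<notin> set zs"
  shows "(THE p. p < length xs \<and> xs ! p = x) = length ys"
proof (rule the_equality)
  fix p assume p: "p < length xs \<and> xs ! p = x"
  show "p = length ys"
  proof (rule ccontr)
    assume "p \<noteq> length ys"
    then have "xs ! p \<in> set ys \<or> xs ! p \<in> set zs"
      using p assms(1) by (cases "p < length ys") (auto simp: nth_append nth_Cons')
    with p assms(2,3) show False by simp
  qed
qed (simp add: assms(1))

lemma greatest_RP_run:
  assumes ts: "ts = P @ x # replicate r RP @ y # R" and "0 < r" "y \<noteq> RP"
  shows "(GREATEST q. q < length ts \<and> length P < q \<and> (\<forall>k. length P < k \<and> k \<le> q \<longrightarrow> ts ! k = RP))
    = length P + r"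
proof (rule Greatest_equality)
  have nth: "ts ! (length P + 1 + j) = (replicate r RP @ y # R) ! j" for j
    by (simp add: ts nth_append)
  have "ts ! k = RP" if "length P < k" "k \<le> length P + r" for k
  proof -
    from that have "k = length P + 1 + (k - length P - 1)" "k - length P - 1 < r" by linarith+
    then show ?thesis using nth[of "k - length P - 1"] by (simp add: nth_append)
  qed
  then show "length P + r < length ts \<and> length P < length P + r
      \<and> (\<forall>k. length P < k \<and> k \<le> length P + r \<longrightarrow> ts ! k = RP)"
    using \<open>0 < r\<close> by (simp add: ts)
  fix q assume q: "q < length ts \<and> length P < q \<and> (\<forall>k. length P < k \<and> k \<le> q \<longrightarrow> ts ! k = RP)"
  show "q \<le> length P + r"
  proof (rule ccontr)
    assume "\<not> q \<le> length P + r"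
    with q have "ts ! (length P + 1 + r) = RP" by simp
    moreover have "ts ! (length P + 1 + r) = y" using nth[of r] by (simp add: nth_append)
    ultimately show False using \<open>y \<noteq> RP\<close> by simp
  qed
qed

lemma match_lp_expr:
  assumes ts: "ts = P @ expr t k @ R" and "t \<noteq> Leaf"
  shows "match_lp ts (length P + length (expr t k) - 1) = length P"
  unfolding match_lp_def
proof (rule Greatest_equality)
  let ?E = "expr t k" and ?q = "length P + length (expr t k) - 1"
  have seg: "take (?q - (length P + j) + 1) (drop (length P + j) ts) = drop j ?E"
    if "j < length ?E" for j
    using that by (simp add: ts)
  have "balanced_seg ts (length P) ?q"
    using seg[of 0] by (simp add: balanced_seg_def)
  moreover obtain l r where "t = Node l r" using \<open>t \<noteq> Leaf\<close> by (cases t) auto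
  then have "ts ! length P = LP" "length P < ?q" by (simp_all add: ts)
  ultimately show "length P < ?q \<and> ts ! length P = LP \<and> balanced_seg ts (length P) ?q"
    by simp
  fix y assume y: "y < ?q \<and> ts ! y = LP \<and> balanced_seg ts y ?q"
  show "y \<le> length P"
  proof (rule ccontr)
    assume "\<not> y \<le> length P"
    define j where "j = y - length P"
    then have j: "y = length P + j" "0 < j" using \<open>\<not> y \<le> length P\<close> by simp_all
    then have "j < length ?E" using y by arith
    then have "count_LP (drop j ?E) = count_RP (drop j ?E)"
      using y seg[of j] j by (simp add: balanced_seg_def Let_def)
    with count_LP_drop_expr_less[OF \<open>t \<noteq> Leaf\<close> \<open>0 < j\<close> \<open>j < length ?E\<close>] show False by simp
  qed
qed

lemma least_X_after_LPs:
  assumes ts: "ts = P @ replicate j LP @ X i # G" and "0 < j"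
  shows "(LEAST r. length P < r \<and> r < length ts \<and> is_X (ts ! r)) = length P + j"
proof (rule Least_equality)
  show "length P < length P + j \<and> length P + j < length ts \<and> is_X (ts ! (length P + j))"
    using \<open>0 < j\<close> by (simp add: ts nth_append)
  fix r assume r: "length P < r \<and> r < length ts \<and> is_X (ts ! r)"
  show "length P + j \<le> r"
  proof (rule ccontr)
    assume "\<not> length P + j \<le> r"
    with r have "\<not> r < length P" "r - length P < j" by linarith+
    then have "ts ! r = LP" by (simp add: ts nth_append)
    with r show False by simp
  qed
qed

text \<open>
  The leaf x_i, \<open>i = k + internal a\<close>, is the last leaf of a. If a is a leaf, x_i follows
  the opening parenthesis of the node. Otherwise the run of right parentheses after x_i closes
  a, the last of them matches the parenthesis opening a, and the first variable after that
  one is x_k.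
\<close>
lemma name_comp_node:
  assumes ts: "ts = pre @ LP # expr a k @ expr b (k + internal a + 1) @ RP # post"
    and notin: "X (k + internal a) \<notin> set pre" "X (k + internal a) \<notin> set post"
  shows "name_comp ts (k + internal a) = k"
proof -
  let ?i = "k + internal a" and ?B = "expr b (k + internal a + 1) @ RP # post"
  obtain F r where F: "expr a k = F @ X ?i # replicate r RP" "X ?i \<notin> set F"
    "a = Leaf \<longrightarrow> F = []" "a \<noteq> Leaf \<longrightarrow> 0 < r \<and> F \<noteq> [] \<and> last F \<noteq> LP"
    using expr_end by blast
  define p where "p = length (pre @ LP # F)"
  have tsF: "ts = (pre @ LP # F) @ X ?i # (replicate r RP @ ?B)"
    using ts F(1) by simp
  have "X ?i \<notin> set (replicate r RP @ ?B)"
    using notin(2) by (auto simp: X_in_expr_iff)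
  then have the_p: "(THE p. p < length ts \<and> ts ! p = X ?i) = p"
    unfolding p_def using the_index_eq[OF tsF] notin(1) F(2) by simp
  show ?thesis
  proof (cases "a = Leaf")
    case True
    then have "0 < p \<and> ts ! (p - 1) = LP" using F(3) by (simp add: tsF p_def nth_append)
    with True show ?thesis unfolding name_comp_def Let_def the_p by simp
  next
    case False
    with F(4) have "\<not> (0 < p \<and> ts ! (p - 1) = LP)"
      by (auto simp: tsF p_def nth_append last_conv_nth)
    moreover obtain y R where yR: "?B = y # R" "y \<noteq> RP"
      using hd_expr_not_RP[of b "?i + 1"] by (cases "expr b (?i + 1)") auto
    then have "(GREATEST q. q < length ts \<and> p < q \<and> (\<forall>k. p < k \<and> k \<le> q \<longrightarrow> ts ! k = RP))
        = p + r"
      unfolding p_def using tsF F(4) False by (intro greatest_RP_run) simp_all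
    moreover have "match_lp ts (p + r) = length pre + 1"
      using match_lp_expr[of ts "pre @ [LP]" a k ?B] False F(1) by (simp add: ts p_def add.assoc)
    moreover obtain j G where "expr a k = replicate j LP @ X k # G" "0 < j"
      using expr_start[of a k] False by blast
    then have "(LEAST r. length pre + 1 < r \<and> r < length ts \<and> is_X (ts ! r)) = length pre + 1 + j"
      and "ts ! (length pre + 1 + j) = X k"
      using least_X_after_LPs[of ts "pre @ [LP]" j k "G @ ?B"] by (simp_all add: ts nth_append)
    ultimately show ?thesis unfolding name_comp_def Let_def the_p by auto
  qed
qed

lemma name_comp_in_context:
  assumes "ts = pre @ expr s k @ post"
    and "\<forall>j. X j \<in> set pre \<longrightarrow> j < k" "\<forall>j. X j \<in> set post \<longrightarrow> k + internal s < j"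
    and "k \<le> i" "i < k + internal s"
  shows "name_comp ts i = name_from s k ! (i - k)"
  using assms
proof (induction s arbitrary: pre post k)
  case (Node a b)
  let ?k' = "k + internal a + 1"
  have ts: "ts = pre @ LP # expr a k @ expr b ?k' @ RP # post" using Node.prems(1) by simp
  consider "i < k + internal a" | "i = k + internal a" | "k + internal a < i" by linarith
  then show ?case
  proof cases
    case 1
    have "name_comp ts i = name_from a k ! (i - k)"
      by (rule Node.IH(1)[where pre = "pre @ [LP]" and post = "expr b ?k' @ RP # post"])
        (use ts 1 Node.prems in \<open>auto simp: X_in_expr_iff\<close>)
    moreover have "i - k < internal a" using 1 Node.prems(4) by linarith
    ultimately show ?thesis by (simp add: nth_append)
  next
    case 2
    have "name_comp ts i = k"
      unfolding 2 by (rule name_comp_node[OF ts]) (use Node.prems(2,3) in auto)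
    with 2 show ?thesis by (simp add: nth_append)
  next
    case 3
    define m where "m = i - ?k'"
    with 3 have i: "i = ?k' + m" by simp
    have "name_comp ts i = name_from b ?k' ! (i - ?k')"
      by (rule Node.IH(2)[where pre = "pre @ LP # expr a k" and post = "RP # post"])
        (use ts 3 Node.prems in \<open>auto simp: X_in_expr_iff\<close>)
    then show ?thesis unfolding i by (simp add: nth_append)
  qed
qed simp

lemma name_eq_name_from: "name t = name_from t 1"
proof (rule nth_equalityI)
  fix j assume "j < length (name t)"
  then have j: "j < internal t" by (simp add: name_def del: upt_Suc)
  then have "name t ! j = name_comp (expr t 1) (1 + j)"
    by (simp add: name_def cexpr_def add.commute del: upt_Suc)
  also have "\<dots> = name_from t 1 ! j"
    using name_comp_in_context[of "expr t 1" "[]" t 1 "[]" "1 + j"] j by simp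
  finally show "name t ! j = name_from t 1 ! j" .
qed (simp add: name_def del: upt_Suc)

section \<open>The operations on names\<close>

lemma Nhat_iff: "v \<in> Nhat n \<longleftrightarrow> (\<exists>t. internal t = n \<and> v = name_from t 1)"
  by (auto simp: Nhat_def Y_def name_eq_name_from)

lemma Nhat_eq_image: "Nhat n = name ` {t. internal t = n}"
  by (simp add: Nhat_def Y_def)

lemma NhatAll_eq_image: "NhatAll = name ` {t. 1 \<le> internal t}"
  by (auto simp: NhatAll_def Nhat_def Y_def)

lemma length_Nhat: "v \<in> Nhat n \<Longrightarrow> length v = n"
  by (auto simp: Nhat_iff)

lemma Nhat_nth_bounds: "v \<in> Nhat n \<Longrightarrow> p < n \<Longrightarrow> 1 \<le> v ! p \<and> v ! p \<le> Suc p"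
  using name_from_bounds[of p _ 1] by (auto simp: Nhat_iff)

lemma Nhat_entries_pos: "v \<in> Nhat n \<Longrightarrow> a \<in> set v \<Longrightarrow> 1 \<le> a"
  using Nhat_nth_bounds length_Nhat by (metis in_set_conv_nth)

lemma finite_Nhat: "finite (Nhat n)"
proof (rule finite_subset)
  show "Nhat n \<subseteq> {v. set v \<subseteq> {..n} \<and> length v = n}"
    using Nhat_nth_bounds length_Nhat by (fastforce simp: in_set_conv_nth)
  show "finite {v. set v \<subseteq> {..n} \<and> length v = n}"
    by (rule finite_lists_length_eq) simp
qed

lemma name_over: "name (over p t) = over_name (name p) (name t)"
  by (simp add: name_eq_name_from name_from_over over_name_def tri_def)

lemma name_under: "name (under p t) = under_name (name p) (name t)"
  by (simp add: name_eq_name_from name_from_under under_name_def)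

lemma inj_name: "inj name"
  by (rule injI) (simp add: name_eq_name_from name_from_inj)

lemma over_name_in_Nhat: "v \<in> Nhat n \<Longrightarrow> w \<in> Nhat m \<Longrightarrow> over_name v w \<in> Nhat (n + m)"
  by (auto simp: Nhat_eq_image simp flip: name_over)

lemma under_name_in_Nhat: "v \<in> Nhat n \<Longrightarrow> w \<in> Nhat m \<Longrightarrow> under_name v w \<in> Nhat (n + m)"
  by (auto simp: Nhat_eq_image simp flip: name_under)

lemma NhatAll_closed:
  "u \<in> NhatAll \<Longrightarrow> v \<in> NhatAll \<Longrightarrow> over_name u v \<in> NhatAll \<and> under_name u v \<in> NhatAll"
  by (auto simp: NhatAll_eq_image simp flip: name_over name_under)

lemma NhatAll_nonempty_pos: "u \<in> NhatAll \<Longrightarrow> u \<noteq> [] \<and> (\<forall>a\<in>set u. 1 \<le> a)"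
  using length_Nhat Nhat_entries_pos by (fastforce simp: NhatAll_def)

lemma tri_tri: "1 \<le> a \<Longrightarrow> tri x (tri y a) = tri (x + y) a"
  by (simp add: tri_def)

lemma over_name_assoc:
  "\<forall>a\<in>set w. 1 \<le> a \<Longrightarrow> over_name (over_name u v) w = over_name u (over_name v w)"
  by (simp add: over_name_def tri_tri add.commute)

lemma under_name_assoc: "under_name (under_name u v) w = under_name u (under_name v w)"
  by (simp add: under_name_def add.assoc add.commute)

lemma under_over_name:
  assumes "\<forall>a\<in>set w. 1 \<le> a" "v \<noteq> []"
  shows "under_name (over_name u v) w = over_name u (under_name v w)"
proof -
  have "a + length v \<noteq> 1" if "a \<in> set w" for a
    using assms that by (cases v) auto
  then show ?thesis by (auto simp: over_name_def under_name_def tri_def)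
qed

lemma over_assoc: "over (over p t) s = over p (over t s)"
  by (induction s) auto

lemma under_assoc: "under (under p t) s = under p (under t s)"
  by (induction p) auto

lemma under_over: "t \<noteq> Leaf \<Longrightarrow> under (over p t) s = over p (under t s)"
  by (cases t) auto

lemma assoc_L_algebra_names:
  "assoc_L_algebra (free_on NhatAll :: (nat list \<Rightarrow> 'k::field) set)
    (bilin_ext over_name) (bilin_ext under_name)"
  by (rule assoc_L_algebra_free_on)
    (use NhatAll_closed NhatAll_nonempty_pos
      in \<open>simp_all add: over_name_assoc under_name_assoc under_over_name\<close>)

lemma assoc_L_algebra_trees:
  "assoc_L_algebra (free_on {t. 1 \<le> internal t} :: (tree \<Rightarrow> 'k::field) set)
    (bilin_ext over) (bilin_ext under)"
  by (rule assoc_L_algebra_free_on) (auto simp: over_assoc under_assoc intro!: under_over)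

lemma L_alg_iso_name:
  "L_alg_iso (free_on {t. 1 \<le> internal t} :: (tree \<Rightarrow> 'k::field) set)
    (bilin_ext over) (bilin_ext under)
    (free_on NhatAll) (bilin_ext over_name) (bilin_ext under_name) (lin_ext name)"
  unfolding NhatAll_eq_image
  using assoc_L_algebra_names[unfolded NhatAll_eq_image] assoc_L_algebra_trees
  by (intro L_alg_iso_lin_ext) (auto simp: inj_on_subset[OF inj_name] name_over name_under)

section \<open>The Moebius function of names\<close>

lemma le_vec_sum_list_less:
  assumes "le_vec z b" "z \<noteq> b"
  shows "sum_list z < sum_list b"
proof -
  have len: "length z = length b" and le: "\<forall>i<length z. z ! i \<le> b ! i"
    using assms(1) by (simp_all add: le_vec_def)
  then obtain i where "i < length z" "z ! i \<noteq> b ! i"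
    using assms(2) nth_equalityI by blast
  with le have "z ! i < b ! i" by (simp add: le_neq_trans)
  with \<open>i < length z\<close> have "\<exists>i\<in>{0..<length z}. z ! i < b ! i" by auto
  with le len show ?thesis
    by (simp add: sum_list_sum_nth sum_strict_mono_ex1)
qed

function mobius_vec :: "nat list set \<Rightarrow> nat list \<Rightarrow> nat list \<Rightarrow> int" where
  "mobius_vec P a b = (if a \<in> P \<and> b \<in> P \<and> le_vec a b then (if a = b then 1 else
      - (\<Sum>z\<in>{z\<in>P. le_vec a z \<and> le_vec z b \<and> z \<noteq> b}. mobius_vec P a z)) else 0)"
  by auto
termination
  by (relation "measure (\<lambda>(P, a, b). sum_list b)") (auto intro: le_vec_sum_list_less)

declare mobius_vec.simps [simp del]

lemma mobius_le_vec: "mobius P le_vec = mobius_vec P"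
  unfolding mobius_def
proof (rule the_equality)
  show "\<forall>a b. mobius_vec P a b =
      (if a \<in> P \<and> b \<in> P \<and> le_vec a b then (if a = b then 1 else
        - (\<Sum>z\<in>{z\<in>P. le_vec a z \<and> le_vec z b \<and> z \<noteq> b}. mobius_vec P a z)) else 0)"
    using mobius_vec.simps by blast
  fix f :: "nat list \<Rightarrow> nat list \<Rightarrow> int"
  assume f: "\<forall>a b. f a b =
      (if a \<in> P \<and> b \<in> P \<and> le_vec a b then (if a = b then 1 else
        - (\<Sum>z\<in>{z\<in>P. le_vec a z \<and> le_vec z b \<and> z \<noteq> b}. f a z)) else 0)"
  show "f = mobius_vec P"
  proof (intro ext)
    fix a b show "f a b = mobius_vec P a b"
    proof (induction "sum_list b" arbitrary: b rule: less_induct)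
      case less
      have "(\<Sum>z\<in>{z\<in>P. le_vec a z \<and> le_vec z b \<and> z \<noteq> b}. f a z)
          = (\<Sum>z\<in>{z\<in>P. le_vec a z \<and> le_vec z b \<and> z \<noteq> b}. mobius_vec P a z)"
        using less le_vec_sum_list_less by (intro sum.cong) auto
      then show ?case using f[rule_format, of a b] mobius_vec.simps[of P a b] by simp
    qed
  qed
qed

lemma Nhat_eq_replicate_1:
  assumes "v \<in> Nhat n" "\<And>p. 0 < p \<Longrightarrow> p < n \<Longrightarrow> v ! p \<noteq> Suc p"
  shows "v = replicate n 1"
proof -
  obtain t where t: "internal t = n" "v = name_from t 1" using assms(1) by (auto simp: Nhat_iff)
  have "name_from t 1 = replicate (internal t) 1"
    by (rule name_from_eq_replicate) (use assms(2) t in auto)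
  with t show ?thesis by simp
qed

text \<open>Appending the entry 1 or n + 1 to a name means grafting a cherry over or under the tree.\<close>
lemma Nhat_if_nth_1_or_Suc:
  "length z = n \<Longrightarrow> (\<forall>p<n. z ! p = 1 \<or> z ! p = Suc p) \<Longrightarrow> z \<in> Nhat n"
proof (induction n arbitrary: z)
  case 0
  then show ?case by (auto simp: Nhat_iff intro: exI[of _ Leaf])
next
  case (Suc n)
  have "take n z \<in> Nhat n" using Suc.prems by (intro Suc.IH) auto
  then obtain t where t: "internal t = n" "take n z = name_from t 1" by (auto simp: Nhat_iff)
  have z: "z = take n z @ [z ! n]"
    using Suc.prems(1) by (metis lessI take_Suc_conv_app_nth take_all order_refl)
  consider "z ! n = 1" | "z ! n = Suc n" using Suc.prems by blast
  then show ?case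
  proof cases
    case 1
    then have "name_from (over t (Node Leaf Leaf)) 1 = z" using t z by (simp add: name_from_over)
    then show ?thesis using t by (auto simp: Nhat_iff intro!: exI[of _ "over t (Node Leaf Leaf)"])
  next
    case 2
    then have "name_from (under t (Node Leaf Leaf)) 1 = z" using t z by (simp add: name_from_under)
    then show ?thesis using t by (auto simp: Nhat_iff intro!: exI[of _ "under t (Node Leaf Leaf)"])
  qed
qed

definition mobius_factor :: "nat \<Rightarrow> nat \<Rightarrow> int" where
  "mobius_factor p a = (if a = 1 then 1 else if a = Suc p then -1 else 0)"

fun mobius_weight :: "nat \<Rightarrow> nat list \<Rightarrow> int" where
  "mobius_weight k [] = 1"
| "mobius_weight k (a # xs) = mobius_factor k a * mobius_weight (Suc k) xs"

lemma mobius_weight_append: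
  "mobius_weight k (xs @ ys) = mobius_weight k xs * mobius_weight (k + length xs) ys"
  by (induction xs arbitrary: k) auto

lemma mobius_weight_conv_prod: "mobius_weight k xs = (\<Prod>p<length xs. mobius_factor (k + p) (xs ! p))"
  by (induction xs arbitrary: k) (simp_all add: prod.lessThan_Suc_shift del: prod.lessThan_Suc)

lemma mobius_weight_replicate_1 [simp]: "mobius_weight k (replicate n 1) = 1"
  by (induction n arbitrary: k) (auto simp: mobius_factor_def)

lemma mobius_weight_map_tri:
  "\<forall>a\<in>set w. 1 \<le> a \<Longrightarrow> mobius_weight (n + k) (map (tri n) w) = mobius_weight k w"
proof (induction w arbitrary: k)
  case (Cons a w)
  then show ?case using Cons.IH[of "Suc k"] by (auto simp: mobius_factor_def tri_def)
qed simp

lemma mobius_weight_map_shift: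
  assumes "1 \<le> n" "\<forall>a\<in>set w. 1 \<le> a"
  shows "mobius_weight (n + k) (map (\<lambda>a. a + n) w)
    = (if w = [Suc k..<Suc k + length w] then (-1) ^ length w else 0)"
  using assms(2)
proof (induction w arbitrary: k)
  case (Cons a w)
  have "[Suc k..<Suc k + length (a # w)] = Suc k # [Suc (Suc k)..<Suc (Suc k) + length w]"
    by (simp add: upt_rec)
  moreover have "mobius_factor (n + k) (a + n) = (if a = Suc k then -1 else 0)"
    using assms(1) Cons.prems by (auto simp: mobius_factor_def)
  ultimately show ?case using Cons.IH[of "Suc k"] Cons.prems by simp
qed simp

definition corner :: "nat \<Rightarrow> nat set \<Rightarrow> nat list" where
  "corner n S = map (\<lambda>p. if p \<in> S then Suc p else 1) [0..<n]"

lemma mobius_weight_corner: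
  assumes "S \<subseteq> {1..<n}"
  shows "mobius_weight 0 (corner n S) = (-1) ^ card S"
proof -
  have "mobius_weight 0 (corner n S) = (\<Prod>p<n. if p \<in> S then -1 else 1)"
    unfolding mobius_weight_conv_prod using assms
    by (intro prod.cong) (auto simp: corner_def mobius_factor_def)
  also have "\<dots> = (-1) ^ card ({..<n} \<inter> S)"
    by (simp add: prod.If_cases)
  also have "{..<n} \<inter> S = S" using assms by auto
  finally show ?thesis .
qed

lemma inj_on_corner: "inj_on (corner n) (Pow {1..<n})"
proof (rule inj_onI)
  fix S S' assume "S \<in> Pow {1..<n}" "S' \<in> Pow {1..<n}" and eq: "corner n S = corner n S'"
  have "p \<in> S \<longleftrightarrow> p \<in> S'" if "0 < p" "p < n" for p
  proof -
    have "corner n S ! p = corner n S' ! p" using eq by simp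
    with that show ?thesis by (auto simp: corner_def split: if_splits)
  qed
  with \<open>S \<in> Pow {1..<n}\<close> \<open>S' \<in> Pow {1..<n}\<close> show "S = S'" by auto
qed

lemma mobius_weight_eq_0:
  "length z = n \<Longrightarrow> p < n \<Longrightarrow> z ! p \<noteq> 1 \<Longrightarrow> z ! p \<noteq> Suc p \<Longrightarrow> mobius_weight 0 z = 0"
  unfolding mobius_weight_conv_prod by (auto simp: mobius_factor_def intro!: prod_zero)

lemma corners_below_Nhat:
  assumes v: "v \<in> Nhat n"
  defines "D \<equiv> {p. 0 < p \<and> p < n \<and> v ! p = Suc p}"
  shows "{z \<in> Nhat n. le_vec z v \<and> (\<forall>p<n. z ! p = 1 \<or> z ! p = Suc p)} = corner n ` Pow D"
proof (intro equalityI subsetI)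
  fix z assume z: "z \<in> {z \<in> Nhat n. le_vec z v \<and> (\<forall>p<n. z ! p = 1 \<or> z ! p = Suc p)}"
  then have len: "length z = n" using length_Nhat by auto
  let ?S = "{p. 0 < p \<and> p < n \<and> z ! p = Suc p}"
  have "?S \<subseteq> D"
  proof
    fix p assume p: "p \<in> ?S"
    then have "z ! p \<le> v ! p" using z len by (auto simp: le_vec_def)
    moreover have "v ! p \<le> Suc p" using Nhat_nth_bounds[OF v] p by auto
    ultimately show "p \<in> D" using p by (simp add: D_def)
  qed
  moreover have "z = corner n ?S"
  proof (rule nth_equalityI)
    fix p assume "p < length z"
    with z len Nhat_nth_bounds[of z n p] show "z ! p = corner n ?S ! p"
      by (cases "p = 0") (auto simp: corner_def)
  qed (simp add: len corner_def)
  ultimately show "z \<in> corner n ` Pow D" by blast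
next
  fix z assume "z \<in> corner n ` Pow D"
  then obtain S where S: "S \<subseteq> D" "z = corner n S" by auto
  have len: "length z = n" and corner: "\<forall>p<n. z ! p = 1 \<or> z ! p = Suc p"
    using S by (simp_all add: corner_def)
  have "le_vec z v"
    using S Nhat_nth_bounds[OF v] length_Nhat[OF v] by (auto simp: le_vec_def corner_def D_def)
  with Nhat_if_nth_1_or_Suc[OF len corner] corner
  show "z \<in> {z \<in> Nhat n. le_vec z v \<and> (\<forall>p<n. z ! p = 1 \<or> z ! p = Suc p)}" by simp
qed

lemma sum_Pow_minus_one_pow_card:
  assumes "finite D" "D \<noteq> {}"
  shows "(\<Sum>S\<in>Pow D. (-1::int) ^ card S) = 0"
proof -
  have "0 < card D" using assms by (simp add: card_gt_0_iff)
  then show ?thesis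
    using prod_diff_conv_sum[OF assms(1), of "\<lambda>_. 1::int" "\<lambda>_. 1"] by (simp add: power_0_left)
qed

lemma sum_mobius_weight_below:
  assumes v: "v \<in> Nhat n" and "v \<noteq> replicate n 1"
  shows "(\<Sum>z\<in>{z \<in> Nhat n. le_vec z v}. mobius_weight 0 z) = 0"
proof -
  define D where "D = {p. 0 < p \<and> p < n \<and> v ! p = Suc p}"
  let ?C = "{z \<in> Nhat n. le_vec z v \<and> (\<forall>p<n. z ! p = 1 \<or> z ! p = Suc p)}"
  have D: "finite D" "D \<noteq> {}" "D \<subseteq> {1..<n}"
    using Nhat_eq_replicate_1[OF v] assms(2) by (auto simp: D_def)
  have "mobius_weight 0 z = 0" if "z \<in> {z \<in> Nhat n. le_vec z v} - ?C" for z
  proof -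
    from that obtain p where "length z = n" "p < n" "z ! p \<noteq> 1" "z ! p \<noteq> Suc p"
      using length_Nhat by auto
    then show ?thesis by (rule mobius_weight_eq_0)
  qed
  then have "(\<Sum>z\<in>{z \<in> Nhat n. le_vec z v}. mobius_weight 0 z) = (\<Sum>z\<in>?C. mobius_weight 0 z)"
    using finite_Nhat by (intro sum.mono_neutral_right) auto
  also have "\<dots> = (\<Sum>S\<in>Pow D. mobius_weight 0 (corner n S))"
  proof -
    have "inj_on (corner n) (Pow D)" using inj_on_corner by (rule inj_on_subset) (use D(3) in auto)
    then show ?thesis unfolding corners_below_Nhat[OF v, folded D_def] by (simp add: sum.reindex)
  qed
  also have "\<dots> = (\<Sum>S\<in>Pow D. (-1) ^ card S)"
    using D(3) by (intro sum.cong refl mobius_weight_corner) auto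
  also have "\<dots> = 0" using D(1,2) by (rule sum_Pow_minus_one_pow_card)
  finally show ?thesis .
qed

lemma M_eq_mobius_weight: "v \<in> Nhat n \<Longrightarrow> M v = mobius_weight 0 v"
proof (induction "sum_list v" arbitrary: v rule: less_induct)
  case less
  let ?one = "replicate n 1"
  have one: "?one \<in> Nhat n" by (rule Nhat_if_nth_1_or_Suc) auto
  have one_le: "le_vec ?one z" if "z \<in> Nhat n" for z
    using Nhat_nth_bounds[OF that] length_Nhat[OF that] by (auto simp: le_vec_def)
  have M: "M z = mobius_vec (Nhat n) ?one z" if "z \<in> Nhat n" for z
    using length_Nhat[OF that] by (simp add: M_def mobius_le_vec)
  show ?case
  proof (cases "v = ?one")
    case True
    then show ?thesis
      using M[OF one] one one_le[OF one] mobius_weight_replicate_1[of 0 n]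
      by (simp add: mobius_vec.simps)
  next
    case False
    let ?below = "{z \<in> Nhat n. le_vec z v}"
    have "{z \<in> Nhat n. le_vec ?one z \<and> le_vec z v \<and> z \<noteq> v} = ?below - {v}"
      using one_le by auto
    then have "M v = - (\<Sum>z\<in>?below - {v}. mobius_vec (Nhat n) ?one z)"
      using M[OF less.prems] mobius_vec.simps[of "Nhat n" ?one v] one one_le[OF less.prems] False
        less.prems by simp
    also have "\<dots> = - (\<Sum>z\<in>?below - {v}. mobius_weight 0 z)"
      using less.hyps le_vec_sum_list_less M by (intro arg_cong[where f = uminus] sum.cong) auto
    also have "\<dots> = mobius_weight 0 v - (\<Sum>z\<in>?below. mobius_weight 0 z)"
    proof -
      have "v \<in> ?below" using less.prems length_Nhat[OF less.prems] by (simp add: le_vec_def)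
      then show ?thesis using finite_Nhat by (simp add: sum_diff1)
    qed
    also have "\<dots> = mobius_weight 0 v" using sum_mobius_weight_below[OF less.prems False] by simp
    finally show ?thesis .
  qed
qed

lemma M_over_name:
  assumes "v \<in> Nhat n" "w \<in> Nhat m"
  shows "M (over_name v w) = M v * M w"
proof -
  have "M (over_name v w) = mobius_weight 0 v * mobius_weight (n + 0) (map (tri n) w)"
    using M_eq_mobius_weight[OF over_name_in_Nhat[OF assms]] length_Nhat[OF assms(1)]
    by (simp add: over_name_def mobius_weight_append)
  also have "\<dots> = M v * M w"
    using assms mobius_weight_map_tri[of w n 0] Nhat_entries_pos[OF assms(2)]
    by (simp add: M_eq_mobius_weight)
  finally show ?thesis .
qed

lemma M_under_name:
  assumes "1 \<le> n" "v \<in> Nhat n" "w \<in> Nhat m"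
  shows "M (under_name v w) = (if w = [1..<m + 1] then (-1) ^ m * M v else 0)"
proof -
  have "M (under_name v w) = mobius_weight 0 v * mobius_weight (n + 0) (map (\<lambda>a. a + n) w)"
    using M_eq_mobius_weight[OF under_name_in_Nhat[OF assms(2,3)]] length_Nhat[OF assms(2)]
    by (simp add: under_name_def mobius_weight_append)
  also have "\<dots> = (if w = [1..<m + 1] then (-1) ^ m * M v else 0)"
    using mobius_weight_map_shift[OF assms(1), of w 0] Nhat_entries_pos[OF assms(3)]
      length_Nhat[OF assms(3)] M_eq_mobius_weight[OF assms(2)]
    by (simp del: upt_Suc)
  finally show ?thesis .
qed

theorem mainTheorem6:
  shows
  \<comment> \<open>(i)\<close>
  "(\<forall>n m v w. 1 \<le> n \<longrightarrow> 1 \<le> m \<longrightarrow> v \<in> Nhat n \<longrightarrow> w \<in> Nhat m \<longrightarrow>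
       over_name v w \<in> Nhat (n + m) \<and> under_name v w \<in> Nhat (n + m))
   \<and> (\<forall>p t. 1 \<le> internal p \<longrightarrow> 1 \<le> internal t \<longrightarrow>
       name (over p t) = over_name (name p) (name t) \<and>
       name (under p t) = under_name (name p) (name t))
  \<comment> \<open>(ii)\<close>
   \<and> (\<forall>u\<in>NhatAll. \<forall>v\<in>NhatAll. \<forall>w\<in>NhatAll.
       over_name (over_name u v) w = over_name u (over_name v w) \<and>
       under_name (under_name u v) w = under_name u (under_name v w) \<and>
       under_name (over_name u v) w = over_name u (under_name v w))
   \<and> assoc_L_algebra (free_on NhatAll :: (nat list \<Rightarrow> 'k::field_char_0) set)
       (bilin_ext over_name) (bilin_ext under_name)
   \<and> L_alg_iso (free_on {t. 1 \<le> internal t} :: (tree \<Rightarrow> 'k) set)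
       (bilin_ext over) (bilin_ext under)
       (free_on NhatAll) (bilin_ext over_name) (bilin_ext under_name)
       (lin_ext name)
  \<comment> \<open>(iii)\<close>
   \<and> (\<forall>n m v w. 1 \<le> n \<longrightarrow> 1 \<le> m \<longrightarrow> v \<in> Nhat n \<longrightarrow> w \<in> Nhat m \<longrightarrow>
       M (over_name v w) = M v * M w \<and>
       M (under_name v w) = (if w = [1..<m + 1] then (-1) ^ m * M v else 0))"
  using L_alg_iso_name assoc_L_algebra_names NhatAll_nonempty_pos
  by (auto simp: over_name_in_Nhat under_name_in_Nhat name_over name_under over_name_assoc
      under_name_assoc under_over_name M_over_name M_under_name simp del: upt_Suc)

end
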